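(* Let $\varphi(x,y)$ be a formula in the language of $\mathbf{A}^{\natural}$ and let $a\in A$. Then $\varphi(a^1,a^3)\in A_1\cup A_3\cup A_4$ if and only if $\varphi$ has the tree property.
   Context: $\mathbf{A}$ is a fixed non-trivial algebra whose set $\mathcal{F}$ of basic operations contains no constant symbols, and $h$ is a unary function on $A$. Construction of $\mathbf{A}^{\natural}$: universe is the disjoint union of eight copies $A_1,\dots,A_8$ of $A$ ($a^i$ is the copy of $a$ in $A_i$); operations: each $n$-ary $f\in\mathcal{F}$ with $f(a_1^{m_1},\dots,a_n^{m_n})=(f^{\mathbf{A}}(a_1,\dots,a_n))^5$; a ternary $\heartsuit$ with $\heartsuit(a^m,b^n,c^k)=a^1$ if $a^m=c^k$, $h(a)^5=b^n$, $m\in\{1,3,4\}$; $=a^2$ if $a^m=c^k$, $h(a)^5=b^n$, $m\in\{2,5,6,7,8\}$; $=a^4$ if $m,k\in\{1,3,4\}$ and ($a^m\ne c^k$ or $h(a)^5\ne b^n$); $=a^7$ if $\{m,k\}\cap\{2,5,6,7,8\}\ne\emptyset$ and ($a^m\ne c^k$ or $h(a)^5\ne b^n$); a unary $\Box$ with $\Box(a^m)=a^m$ for $m\in\{1,2\}$, $a^{m-1}$ for even $m\ge3$, $a^{m+1}$ for odd $m\ge3$. Subformula tree of a formula $\varphi$ (recursively): for a variable $x$, the one-node tree labelled $x$; for $\varphi=g(\psi_1,\dots,\psi_n)$ with $g$ a basic symbol, take the disjoint union of the subformula trees of $\psi_1,\dots,\psi_n$, relabel the root of the tree of $\psi_i$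 by $\langle\psi_i,i\rangle$, and add a common new root labelled $\varphi$. A formula $\varphi$ has the tree property if every node of its subformula tree whose label is a formula with principal symbol in $\mathcal{F}$ (possibly paired with a natural number) is either equal to or has as an ancestor a node labelled $\langle\beta,2\rangle$ whose immediate predecessor (parent) is labelled $\heartsuit(\alpha,\beta,\gamma)$ or $\langle\heartsuit(\alpha,\beta,\gamma),n\rangle$ for some $n$. *)

theory Defs
  imports Main
begin

datatype ('f, 'v) fm =
    Var 'v
  | Op 'f "('f, 'v) fm list"
  | Heart "('f, 'v) fm" "('f, 'v) fm" "('f, 'v) fm"
  | Box "('f, 'v) fm"

text \<open>Elements of A-natural: the copy a^i of a in A_i is the pair (a, i), 1 <= i <= 8.\<close>

definition nat_carrier :: "('a \<times> nat) set" where
  "nat_carrier = {(a, i). 1 \<le> i \<and> i \<le> 8}"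

definition op_nat :: "('f \<Rightarrow> 'a list \<Rightarrow> 'a) \<Rightarrow> 'f \<Rightarrow> ('a \<times> nat) list \<Rightarrow> 'a \<times> nat" where
  "op_nat interp f xs = (interp f (map fst xs), 5)"

definition heart_nat :: "('a \<Rightarrow> 'a) \<Rightarrow> 'a \<times> nat \<Rightarrow> 'a \<times> nat \<Rightarrow> 'a \<times> nat \<Rightarrow> 'a \<times> nat" where
  "heart_nat h u v w =
     (case u of (a, m) \<Rightarrow> (case v of (b, n) \<Rightarrow> (case w of (c, k) \<Rightarrow>
       if (a, m) = (c, k) \<and> (h a, 5) = (b, n) then
         (if m \<in> {1, 3, 4} then (a, 1) else (a, 2))
       else if m \<in> {1, 3, 4} \<and> k \<in> {1, 3, 4} then (a, 4)
       else (a, 7))))"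

definition box_nat :: "'a \<times> nat \<Rightarrow> 'a \<times> nat" where
  "box_nat u = (case u of (a, m) \<Rightarrow>
     if m \<in> {1, 2} then (a, m) else if even m then (a, m - 1) else (a, m + 1))"

fun eval_nat :: "('f \<Rightarrow> 'a list \<Rightarrow> 'a) \<Rightarrow> ('a \<Rightarrow> 'a) \<Rightarrow> ('v \<Rightarrow> 'a \<times> nat) \<Rightarrow> ('f, 'v) fm \<Rightarrow> 'a \<times> nat" where
  "eval_nat interp h e (Var v) = e v"
| "eval_nat interp h e (Op f ts) = op_nat interp f (map (eval_nat interp h e) ts)"
| "eval_nat interp h e (Heart s t u) =
     heart_nat h (eval_nat interp h e s) (eval_nat interp h e t) (eval_nat interp h e u)"
| "eval_nat interp h e (Box s) = box_nat (eval_nat interp h e s)"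

text \<open>Immediate subformulas, in order (child i of a node is argument number i+1).\<close>

fun args :: "('f, 'v) fm \<Rightarrow> ('f, 'v) fm list" where
  "args (Var v) = []"
| "args (Op f ts) = ts"
| "args (Heart s t u) = [s, t, u]"
| "args (Box s) = [s]"

text \<open>Nodes of the subformula tree: node_at phi p s means that the node reached from
the root by the path p (a list of 1-based argument numbers) is labelled by the
formula s (paired with the last entry of p, if p is nonempty).\<close>

inductive node_at :: "('f, 'v) fm \<Rightarrow> nat list \<Rightarrow> ('f, 'v) fm \<Rightarrow> bool" where
  root: "node_at t [] t"
| child: "i < length (args t) \<Longrightarrow> node_at (args t ! i) p s \<Longrightarrow> node_at t (Suc i # p) s"

fun is_op :: "('f, 'v) fm \<Rightarrow> bool" where
  "is_op (Op f ts) = True"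
| "is_op _ = False"

fun is_heart :: "('f, 'v) fm \<Rightarrow> bool" where
  "is_heart (Heart s t u) = True"
| "is_heart _ = False"

text \<open>Tree property: every node labelled by a formula with principal symbol in F is
equal to, or a descendant of, a node labelled (beta,2) whose parent is a heart node.
Such a node is reached by a path q @ [2] where q leads to a heart node.\<close>

definition tree_property :: "('f, 'v) fm \<Rightarrow> bool" where
  "tree_property phi \<longleftrightarrow>
     (\<forall>p s. node_at phi p s \<and> is_op s \<longrightarrow>
        (\<exists>q r c. p = q @ [2] @ r \<and> node_at phi q c \<and> is_heart c))"

definition wf_fm :: "('f \<Rightarrow> nat) \<Rightarrow> ('f, 'v) fm \<Rightarrow> bool" where
  "wf_fm arity phi \<longleftrightarrow>
     (\<forall>p f ts. node_at phi p (Op f ts) \<longrightarrow> length ts = arity f)"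

definition vars_within :: "('f, 'v) fm \<Rightarrow> 'v set \<Rightarrow> bool" where
  "vars_within phi V \<longleftrightarrow> (\<forall>p v. node_at phi p (Var v) \<longrightarrow> v \<in> V)"

end

theory Submission
  imports Defs
begin

text \<open>Whether an element lies in \<open>A\<^sub>1 \<union> A\<^sub>3 \<union> A\<^sub>4\<close> is decided by its index alone, and the
index class is compositional: basic operations always land in \<open>A\<^sub>5\<close>, \<open>\<box>\<close> preserves the
class, and \<open>\<heartsuit>(\<alpha>, \<beta>, \<gamma>)\<close> lands in it exactly when \<open>\<alpha>\<close> and \<open>\<gamma>\<close> do, whatever \<open>\<beta>\<close> is.
The tree property decomposes in the same way, with the middle argument of \<open>\<heartsuit>\<close> ignored,
so both sides agree by structural induction. This works for every assignment of the
variables into \<open>A\<^sub>1 \<union> A\<^sub>3 \<union> A\<^sub>4\<close>.\<close>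

lemma snd_op_nat [simp]: "snd (op_nat interp f xs) = 5"
  by (simp add: op_nat_def)

lemma snd_heart_nat_in_134:
  "snd (heart_nat h u v w) \<in> {1, 3, 4} \<longleftrightarrow> snd u \<in> {1, 3, 4} \<and> snd w \<in> {1, 3, 4}"
  by (cases u; cases v; cases w) (auto simp: heart_nat_def)

lemma snd_box_nat_in_134: "snd (box_nat u) \<in> {1, 3, 4} \<longleftrightarrow> snd u \<in> {1, 3, 4}"
  by (cases u) (auto simp: box_nat_def)

lemma node_at_Nil: "node_at t [] s \<longleftrightarrow> s = t"
  by (auto elim: node_at.cases intro: node_at.root)

lemma node_at_Cons:
  "node_at t (j # p) s \<longleftrightarrow> (\<exists>i. j = Suc i \<and> i < length (args t) \<and> node_at (args t ! i) p s)"
  by (auto elim: node_at.cases intro: node_at.child)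

lemma tree_property_Op [simp]: "\<not> tree_property (Op f ts)"
  unfolding tree_property_def by (auto intro!: exI[of _ "[]"] simp: node_at_Nil)

lemma tree_property_child:
  assumes "tree_property t" "i < length (args t)" "\<not> (is_heart t \<and> i = 1)"
  shows "tree_property (args t ! i)"
  unfolding tree_property_def
proof (intro allI impI)
  fix p s assume ps: "node_at (args t ! i) p s \<and> is_op s"
  then have "node_at t (Suc i # p) s" using assms(2) by (auto intro: node_at.child)
  then obtain q r c where qrc: "Suc i # p = q @ [2] @ r" "node_at t q c" "is_heart c"
    using assms(1) ps unfolding tree_property_def by blast
  show "\<exists>q r c. p = q @ [2] @ r \<and> node_at (args t ! i) q c \<and> is_heart c"
    using qrc assms(3) by (cases q) (auto simp: node_at_Nil node_at_Cons)
qed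

lemma tree_property_of_children:
  assumes "\<not> is_op t"
    and children: "\<And>i. i < length (args t) \<Longrightarrow> \<not> (is_heart t \<and> i = 1) \<Longrightarrow> tree_property (args t ! i)"
  shows "tree_property t"
  unfolding tree_property_def
proof (intro allI impI)
  fix p s assume ps: "node_at t p s \<and> is_op s"
  with assms(1) obtain i p' where p: "p = Suc i # p'"
    and i: "i < length (args t)" "node_at (args t ! i) p' s"
    by (cases p) (auto simp: node_at_Nil node_at_Cons)
  show "\<exists>q r c. p = q @ [2] @ r \<and> node_at t q c \<and> is_heart c"
  proof (cases "is_heart t \<and> i = 1")
    case True
    with p show ?thesis by (intro exI[of _ "[]"] exI[of _ p'] exI[of _ t]) (auto simp: node_at_Nil)
  next
    case False
    then obtain q r c where "p' = q @ [2] @ r" "node_at (args t ! i) q c" "is_heart c"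
      using children i ps unfolding tree_property_def by blast
    with p i show ?thesis
      by (intro exI[of _ "Suc i # q"] exI[of _ r] exI[of _ c]) (auto simp: node_at_Cons)
  qed
qed

lemma tree_property_iff_children:
  assumes "\<not> is_op t"
  shows "tree_property t \<longleftrightarrow>
    (\<forall>i < length (args t). \<not> (is_heart t \<and> i = 1) \<longrightarrow> tree_property (args t ! i))"
  using assms tree_property_child tree_property_of_children by blast

lemma tree_property_Var [simp]: "tree_property (Var v)"
  by (simp add: tree_property_iff_children)

lemma tree_property_Heart [simp]: "tree_property (Heart s t u) \<longleftrightarrow> tree_property s \<and> tree_property u"
  by (auto simp: tree_property_iff_children less_Suc_eq nth_Cons')

lemma tree_property_Box [simp]: "tree_property (Box s) \<longleftrightarrow> tree_property s"
  by (simp add: tree_property_iff_children)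

lemma eval_nat_in_134_iff_tree_property:
  assumes "\<And>v. snd (e v) \<in> {1, 3, 4}"
  shows "snd (eval_nat interp h e phi) \<in> {1, 3, 4} \<longleftrightarrow> tree_property phi"
proof (induction phi)
  case (Op f ts)
  show ?case by simp
qed (simp_all only: eval_nat.simps assms snd_heart_nat_in_134 snd_box_nat_in_134
       tree_property_Var tree_property_Heart tree_property_Box simp_thms)

theorem lemma6p4:
  fixes arity :: "'f \<Rightarrow> nat"
    and interp :: "'f \<Rightarrow> 'a list \<Rightarrow> 'a"
    and h :: "'a \<Rightarrow> 'a"
    and phi :: "('f, 'v) fm"
    and x y :: 'v
    and a :: 'a
  assumes nontrivial: "\<exists>b c :: 'a. b \<noteq> c"
    and no_constants: "\<forall>f. 0 < arity f"
    and wf: "wf_fm arity phi"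
    and vars: "vars_within phi {x, y}"
    and xy: "x \<noteq> y"
  shows "snd (eval_nat interp h (\<lambda>v. if v = x then (a, 1) else (a, 3)) phi) \<in> {1, 3, 4}
         \<longleftrightarrow> tree_property phi"
  by (rule eval_nat_in_134_iff_tree_property) simp

end
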